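(* (1) Let $f:(0,\infty)\to\mathbb{R}$ be completely monotone and suppose $\int_0^{t_0}|f(t)|t^\beta\,\mathrm{d}t<\infty$ for some $\beta\in(-1,\infty)$ and $t_0>0$. Then for every $k\in\mathbb{N}$ there is $C_{k,\beta}>0$ with $$\int_0^{t_0}|f^{(k)}(t)|\,t^{k+\beta}\,\mathrm{d}t\le C_{k,\beta}\int_0^{t_0}f(t)\,t^\beta\,\mathrm{d}t.$$ (2) Let $f:(0,\infty)\to\mathbb{R}$ be smooth with $\int_0^{t_0}|f(t)|t^\beta\,\mathrm{d}t<\infty$ for some $\beta\in(-1,\infty)$ and $t_0>0$, and suppose $f'$ has constant sign. Then $$\int_0^{t_0}|f'(t)|\,t^{1+\beta}\,\mathrm{d}t\le(1+\beta)\int_0^{t_0}|f(t)|\,t^\beta\,\mathrm{d}t+|f(t_0)|\,t_0^{1+\beta}.$$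
   Context: A function $g:(0,\infty)\to\mathbb{R}$ is completely monotone if it is $C^\infty$ and $(-1)^ng^{(n)}(t)\ge0$ for all $t>0$ and $n\in\mathbb{N}$. *)

theory Defs
  imports "HOL-Analysis.Analysis"
begin

definition smooth_pos :: "(real \<Rightarrow> real) \<Rightarrow> bool" where
  "smooth_pos f \<longleftrightarrow>
     (\<forall>n t. 0 < t \<longrightarrow> ((deriv ^^ n) f has_real_derivative (deriv ^^ Suc n) f t) (at t))"

definition completely_monotone :: "(real \<Rightarrow> real) \<Rightarrow> bool" where
  "completely_monotone f \<longleftrightarrow> smooth_pos f \<and>
     (\<forall>n t. 0 < t \<longrightarrow> 0 \<le> (-1) ^ n * (deriv ^^ n) f t)"

end

theory Submission
  imports Defs
begin

text \<open>
  For \<open>F\<close> nondecreasing on \<open>(0, \<infinity>)\<close>, write \<open>t powr (1 + \<gamma>) = (1 + \<gamma>) \<integral>\<^sub>0\<^sup>t s powr \<gamma> ds\<close>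
  and exchange the order of integration (Tonelli):
  \<open>\<integral>\<^sub>0\<^sup>t\<^sup>0 F' t * t powr (1 + \<gamma>) dt = (1 + \<gamma>) \<integral>\<^sub>0\<^sup>t\<^sup>0 (F t0 - F s) * s powr \<gamma> ds\<close>.
  Part (2) follows from \<open>F t0 - F s \<le> |F t0| + |F s|\<close> with \<open>F = \<plusminus>f\<close>. For part (1),
  \<open>F = (-1)^(k+1) f\<^sup>(\<^sup>k\<^sup>)\<close> is nonpositive and nondecreasing, so \<open>F t0 - F s \<le> |F s|\<close>;
  induction on \<open>k\<close> then gives \<open>C = (1 + \<beta>)(2 + \<beta>)\<cdots>(k + \<beta>)\<close>, a Pochhammer symbol.
\<close>

lemma nn_integral_Ioo_eq_has_integral:
  fixes g :: "real \<Rightarrow> real"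
  assumes "\<And>x. x \<in> {a<..<b} \<Longrightarrow> 0 \<le> g x" "(g has_integral I) {a..b}"
  shows "(\<integral>\<^sup>+ t \<in> {a<..<b}. ennreal (g t) \<partial>lborel) = ennreal I"
proof -
  have "(g has_integral I) {a<..<b}"
    using has_integral_open_interval[of g I a b] assms(2) by (simp add: box_real cbox_interval)
  then show ?thesis using nn_integral_has_integral_lebesgue' assms(1) by blast
qed

lemma nn_integral_cmult_powr_Ioo:
  assumes "\<gamma> > -1" "0 \<le> t" "0 \<le> c"
  shows "(\<integral>\<^sup>+ s \<in> {0<..<t}. ennreal (c * s powr \<gamma>) \<partial>lborel) = ennreal (c * (t powr (1 + \<gamma>) / (1 + \<gamma>)))"
  using nn_integral_Ioo_eq_has_integral[OF _ has_integral_mult_right[OF has_integral_powr_from_0]] assms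
  by (simp add: add.commute)

lemma nn_integral_deriv_Ioo:
  fixes F F' :: "real \<Rightarrow> real"
  assumes "a \<le> b" and F: "\<And>t. t \<in> {a..b} \<Longrightarrow> (F has_real_derivative F' t) (at t)"
    and "\<And>t. t \<in> {a<..<b} \<Longrightarrow> 0 \<le> F' t"
  shows "(\<integral>\<^sup>+ t \<in> {a<..<b}. ennreal (F' t) \<partial>lborel) = ennreal (F b - F a)"
proof (rule nn_integral_Ioo_eq_has_integral)
  show "(F' has_integral F b - F a) {a..b}"
    using assms(1) F
    by (intro fundamental_theorem_of_calculus)
       (auto simp: has_real_derivative_iff_has_vector_derivative[symmetric] intro: has_field_derivative_at_within)
qed (use assms in auto)

lemma borel_measurable_indicator_Ioo_mult:
  fixes g :: "real \<Rightarrow> real"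
  assumes "continuous_on {a<..<b} g"
  shows "(\<lambda>t. indicator {a<..<b} t * g t) \<in> borel_measurable borel"
  using borel_measurable_continuous_on_indicator[OF _ assms] by simp

lemma borel_measurable_ennreal_mult_indicator_Ioo:
  fixes g :: "real \<Rightarrow> real"
  assumes "continuous_on {a<..<b} g"
  shows "(\<lambda>t. ennreal (g t) * indicator {a<..<b} t) \<in> borel_measurable borel"
proof -
  have "(\<lambda>t. ennreal (indicator {a<..<b} t * g t)) \<in> borel_measurable borel"
    using borel_measurable_indicator_Ioo_mult[OF assms] by measurable
  moreover have "(\<lambda>t. ennreal (indicator {a<..<b} t * g t)) = (\<lambda>t. ennreal (g t) * indicator {a<..<b} t)"
    by (auto simp: indicator_def)
  ultimately show ?thesis by simp
qed

lemma nn_integral_deriv_mult_powr: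
  fixes F F' :: "real \<Rightarrow> real"
  assumes \<gamma>: "\<gamma> > -1" and t0: "0 < t0"
    and F: "\<And>t. 0 < t \<Longrightarrow> (F has_real_derivative F' t) (at t)"
    and cont: "continuous_on {0<..} F'" and nonneg: "\<And>t. 0 < t \<Longrightarrow> 0 \<le> F' t"
  shows "(\<integral>\<^sup>+ t \<in> {0<..<t0}. ennreal (F' t * t powr (1 + \<gamma>)) \<partial>lborel)
       = ennreal (1 + \<gamma>) * (\<integral>\<^sup>+ s \<in> {0<..<t0}. ennreal ((F t0 - F s) * s powr \<gamma>) \<partial>lborel)"
proof -
  define D where "D t = indicator {0<..<t0} t * F' t" for t
  have [measurable]: "D \<in> borel_measurable borel"
    unfolding D_def by (rule borel_measurable_indicator_Ioo_mult) (rule continuous_on_subset[OF cont], auto)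
  define H where "H s t = ennreal (if 0 < s \<and> s < t then (1 + \<gamma>) * s powr \<gamma> * D t else 0)" for s t
  have "(\<integral>\<^sup>+ t \<in> {0<..<t0}. ennreal (F' t * t powr (1 + \<gamma>)) \<partial>lborel)
      = (\<integral>\<^sup>+ t. \<integral>\<^sup>+ s. H s t \<partial>lborel \<partial>lborel)"
  proof (intro nn_integral_cong)
    fix t
    show "ennreal (F' t * t powr (1 + \<gamma>)) * indicator {0<..<t0} t = (\<integral>\<^sup>+ s. H s t \<partial>lborel)"
    proof (cases "t \<in> {0<..<t0}")
      case True
      then have "(\<integral>\<^sup>+ s. H s t \<partial>lborel) = (\<integral>\<^sup>+ s \<in> {0<..<t}. ennreal ((1 + \<gamma>) * F' t * s powr \<gamma>) \<partial>lborel)"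
        by (intro nn_integral_cong) (auto simp: H_def D_def indicator_def mult_ac)
      also have "\<dots> = ennreal (F' t * t powr (1 + \<gamma>))"
        using True \<gamma> nonneg[of t] by (subst nn_integral_cmult_powr_Ioo) auto
      finally show ?thesis using True by simp
    next
      case False
      then have "H s t = 0" for s by (auto simp: H_def D_def)
      then show ?thesis using False by simp
    qed
  qed
  also have "\<dots> = (\<integral>\<^sup>+ s. \<integral>\<^sup>+ t. H s t \<partial>lborel \<partial>lborel)"
    by (rule lborel_pair.Fubini') (simp add: H_def case_prod_unfold)
  also have "\<dots> = (\<integral>\<^sup>+ s. ennreal (1 + \<gamma>) * (ennreal ((F t0 - F s) * s powr \<gamma>) * indicator {0<..<t0} s) \<partial>lborel)"
  proof (intro nn_integral_cong)
    fix s
    show "(\<integral>\<^sup>+ t. H s t \<partial>lborel) = ennreal (1 + \<gamma>) * (ennreal ((F t0 - F s) * s powr \<gamma>) * indicator {0<..<t0} s)"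
    proof (cases "s \<in> {0<..<t0}")
      case True
      define c where "c = (1 + \<gamma>) * s powr \<gamma>"
      have "c \<ge> 0"
        using \<gamma> by (simp add: c_def)
      have "(\<integral>\<^sup>+ t. H s t \<partial>lborel) = (\<integral>\<^sup>+ t \<in> {s<..<t0}. ennreal (c * F' t) \<partial>lborel)"
        using True by (intro nn_integral_cong) (auto simp: H_def D_def c_def indicator_def)
      also have "\<dots> = ennreal (c * F t0 - c * F s)"
        using True \<open>c \<ge> 0\<close> nonneg by (intro nn_integral_deriv_Ioo DERIV_cmult F) auto
      also have "\<dots> = ennreal (1 + \<gamma>) * ennreal ((F t0 - F s) * s powr \<gamma>)"
        using \<gamma> by (simp add: c_def ennreal_mult' [symmetric] algebra_simps)
      finally show ?thesis using True by simp
    next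
      case False
      then have "H s t = 0" for t by (auto simp: H_def D_def)
      then show ?thesis using False by simp
    qed
  qed
  also have "\<dots> = ennreal (1 + \<gamma>) * (\<integral>\<^sup>+ s \<in> {0<..<t0}. ennreal ((F t0 - F s) * s powr \<gamma>) \<partial>lborel)"
  proof (rule nn_integral_cmult)
    have "continuous_on {0<..<t0} F"
      using DERIV_isCont[OF F] by (intro continuous_at_imp_continuous_on) auto
    then show "(\<lambda>s. ennreal ((F t0 - F s) * s powr \<gamma>) * indicator {0<..<t0} s) \<in> borel_measurable lborel"
      by (auto intro!: borel_measurable_ennreal_mult_indicator_Ioo continuous_intros)
  qed
  finally show ?thesis .
qed

lemma nn_integral_deriv_mult_powr_le:
  fixes F F' :: "real \<Rightarrow> real"
  assumes \<gamma>: "\<gamma> > -1" and t0: "0 < t0"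
    and F: "\<And>t. 0 < t \<Longrightarrow> (F has_real_derivative F' t) (at t)"
    and cont: "continuous_on {0<..} F'" and nonneg: "\<And>t. 0 < t \<Longrightarrow> 0 \<le> F' t"
  shows "(\<integral>\<^sup>+ t \<in> {0<..<t0}. ennreal (F' t * t powr (1 + \<gamma>)) \<partial>lborel)
       \<le> ennreal (1 + \<gamma>) * (\<integral>\<^sup>+ t \<in> {0<..<t0}. ennreal (\<bar>F t\<bar> * t powr \<gamma>) \<partial>lborel)
         + ennreal (\<bar>F t0\<bar> * t0 powr (1 + \<gamma>))"
proof -
  have "continuous_on {0<..<t0} F"
    using DERIV_isCont[OF F] by (intro continuous_at_imp_continuous_on) auto
  then have [measurable]:
    "(\<lambda>s. ennreal (\<bar>F s\<bar> * s powr \<gamma>) * indicator {0<..<t0} s) \<in> borel_measurable borel"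
    "(\<lambda>s. ennreal (\<bar>F t0\<bar> * s powr \<gamma>) * indicator {0<..<t0} s) \<in> borel_measurable borel"
    by (auto intro!: borel_measurable_ennreal_mult_indicator_Ioo continuous_intros)
  from \<gamma> t0 F cont nonneg
  have "(\<integral>\<^sup>+ t \<in> {0<..<t0}. ennreal (F' t * t powr (1 + \<gamma>)) \<partial>lborel)
      = ennreal (1 + \<gamma>) * (\<integral>\<^sup>+ s \<in> {0<..<t0}. ennreal ((F t0 - F s) * s powr \<gamma>) \<partial>lborel)"
    by (rule nn_integral_deriv_mult_powr)
  also have "\<dots> \<le> ennreal (1 + \<gamma>) * (\<integral>\<^sup>+ s. ennreal (\<bar>F s\<bar> * s powr \<gamma>) * indicator {0<..<t0} s
      + ennreal (\<bar>F t0\<bar> * s powr \<gamma>) * indicator {0<..<t0} s \<partial>lborel)"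
  proof (rule mult_left_mono[OF nn_integral_mono])
    fix s
    have "(F t0 - F s) * s powr \<gamma> \<le> \<bar>F s\<bar> * s powr \<gamma> + \<bar>F t0\<bar> * s powr \<gamma>"
      by (simp add: mult_right_mono flip: distrib_right)
    then show "ennreal ((F t0 - F s) * s powr \<gamma>) * indicator {0<..<t0} s
        \<le> ennreal (\<bar>F s\<bar> * s powr \<gamma>) * indicator {0<..<t0} s
          + ennreal (\<bar>F t0\<bar> * s powr \<gamma>) * indicator {0<..<t0} s"
      by (auto simp: indicator_def ennreal_plus dest: ennreal_leI)
  qed simp
  also have "\<dots> = ennreal (1 + \<gamma>) * (\<integral>\<^sup>+ s \<in> {0<..<t0}. ennreal (\<bar>F s\<bar> * s powr \<gamma>) \<partial>lborel)
      + ennreal (1 + \<gamma>) * ennreal (\<bar>F t0\<bar> * (t0 powr (1 + \<gamma>) / (1 + \<gamma>)))"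
    using \<gamma> t0 by (simp add: nn_integral_add nn_integral_cmult_powr_Ioo distrib_left)
  also have "\<dots> = ennreal (1 + \<gamma>) * (\<integral>\<^sup>+ s \<in> {0<..<t0}. ennreal (\<bar>F s\<bar> * s powr \<gamma>) \<partial>lborel)
      + ennreal (\<bar>F t0\<bar> * t0 powr (1 + \<gamma>))"
    using \<gamma> by (simp add: ennreal_mult' [symmetric])
  finally show ?thesis .
qed

lemma nn_integral_deriv_mult_powr_le_nonpos:
  fixes F F' :: "real \<Rightarrow> real"
  assumes \<gamma>: "\<gamma> > -1" and t0: "0 < t0"
    and F: "\<And>t. 0 < t \<Longrightarrow> (F has_real_derivative F' t) (at t)"
    and cont: "continuous_on {0<..} F'" and nonneg: "\<And>t. 0 < t \<Longrightarrow> 0 \<le> F' t"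
    and nonpos: "\<And>t. 0 < t \<Longrightarrow> F t \<le> 0"
  shows "(\<integral>\<^sup>+ t \<in> {0<..<t0}. ennreal (F' t * t powr (1 + \<gamma>)) \<partial>lborel)
       \<le> ennreal (1 + \<gamma>) * (\<integral>\<^sup>+ t \<in> {0<..<t0}. ennreal (\<bar>F t\<bar> * t powr \<gamma>) \<partial>lborel)"
proof -
  from \<gamma> t0 F cont nonneg
  have "(\<integral>\<^sup>+ t \<in> {0<..<t0}. ennreal (F' t * t powr (1 + \<gamma>)) \<partial>lborel)
      = ennreal (1 + \<gamma>) * (\<integral>\<^sup>+ s \<in> {0<..<t0}. ennreal ((F t0 - F s) * s powr \<gamma>) \<partial>lborel)"
    by (rule nn_integral_deriv_mult_powr)
  also have "\<dots> \<le> ennreal (1 + \<gamma>) * (\<integral>\<^sup>+ s \<in> {0<..<t0}. ennreal (\<bar>F s\<bar> * s powr \<gamma>) \<partial>lborel)"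
  proof (rule mult_left_mono[OF nn_integral_mono])
    fix s
    have "F t0 - F s \<le> \<bar>F s\<bar>"
      using nonpos[OF t0] by linarith
    then show "ennreal ((F t0 - F s) * s powr \<gamma>) * indicator {0<..<t0} s
        \<le> ennreal (\<bar>F s\<bar> * s powr \<gamma>) * indicator {0<..<t0} s"
      by (auto simp: indicator_def intro!: ennreal_leI mult_right_mono)
  qed simp
  finally show ?thesis .
qed

lemma smooth_pos_has_real_derivative:
  assumes "smooth_pos f" "0 < t"
  shows "((deriv ^^ n) f has_real_derivative (deriv ^^ Suc n) f t) (at t)"
  using assms unfolding smooth_pos_def by blast

lemma smooth_pos_continuous_on:
  assumes "smooth_pos f"
  shows "continuous_on {0<..} ((deriv ^^ n) f)"
  using DERIV_isCont[OF smooth_pos_has_real_derivative[OF assms]]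
  by (intro continuous_at_imp_continuous_on) auto

lemma completely_monotone_nn_integral_deriv_Suc_le:
  assumes cm: "completely_monotone f" and \<gamma>: "\<gamma> > -1" and t0: "0 < t0"
  shows "(\<integral>\<^sup>+ t \<in> {0<..<t0}. ennreal (\<bar>(deriv ^^ Suc k) f t\<bar> * t powr (1 + \<gamma>)) \<partial>lborel)
       \<le> ennreal (1 + \<gamma>) * (\<integral>\<^sup>+ t \<in> {0<..<t0}. ennreal (\<bar>(deriv ^^ k) f t\<bar> * t powr \<gamma>) \<partial>lborel)"
proof -
  have sm: "smooth_pos f" and sign: "\<And>n t. 0 < t \<Longrightarrow> 0 \<le> (-1) ^ n * (deriv ^^ n) f t"
    using cm unfolding completely_monotone_def by auto
  define F where "F n t = (-1) ^ Suc k * (deriv ^^ n) f t" for n t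
  have "(\<integral>\<^sup>+ t \<in> {0<..<t0}. ennreal (\<bar>(deriv ^^ Suc k) f t\<bar> * t powr (1 + \<gamma>)) \<partial>lborel)
      = (\<integral>\<^sup>+ t \<in> {0<..<t0}. ennreal (F (Suc k) t * t powr (1 + \<gamma>)) \<partial>lborel)"
  proof (intro nn_integral_cong)
    fix t
    have "\<bar>F (Suc k) t\<bar> = F (Suc k) t" if "0 < t"
      unfolding F_def using sign[OF that] by (rule abs_of_nonneg)
    then show "ennreal (\<bar>(deriv ^^ Suc k) f t\<bar> * t powr (1 + \<gamma>)) * indicator {0<..<t0} t
        = ennreal (F (Suc k) t * t powr (1 + \<gamma>)) * indicator {0<..<t0} t"
      by (auto simp: F_def indicator_def abs_mult)
  qed
  also have "\<dots> \<le> ennreal (1 + \<gamma>) * (\<integral>\<^sup>+ t \<in> {0<..<t0}. ennreal (\<bar>F k t\<bar> * t powr \<gamma>) \<partial>lborel)"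
  proof (rule nn_integral_deriv_mult_powr_le_nonpos[OF \<gamma> t0])
    show "(F k has_real_derivative F (Suc k) t) (at t)" if "0 < t" for t
      unfolding F_def by (intro DERIV_cmult smooth_pos_has_real_derivative[OF sm that])
    show "continuous_on {0<..} (F (Suc k))"
      unfolding F_def by (intro continuous_intros smooth_pos_continuous_on[OF sm])
    show "0 \<le> F (Suc k) t" if "0 < t" for t
      unfolding F_def using sign[OF that] .
    show "F k t \<le> 0" if "0 < t" for t
      unfolding F_def using sign[OF that, of k] by simp
  qed
  also have "\<dots> = ennreal (1 + \<gamma>) * (\<integral>\<^sup>+ t \<in> {0<..<t0}. ennreal (\<bar>(deriv ^^ k) f t\<bar> * t powr \<gamma>) \<partial>lborel)"
    by (simp add: F_def abs_mult)
  finally show ?thesis .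
qed

lemma completely_monotone_nn_integral_higher_deriv_le:
  assumes cm: "completely_monotone f" and \<beta>: "\<beta> > -1" and t0: "0 < t0"
  shows "(\<integral>\<^sup>+ t \<in> {0<..<t0}. ennreal (\<bar>(deriv ^^ k) f t\<bar> * t powr (real k + \<beta>)) \<partial>lborel)
       \<le> ennreal (pochhammer (1 + \<beta>) k) * (\<integral>\<^sup>+ t \<in> {0<..<t0}. ennreal (f t * t powr \<beta>) \<partial>lborel)"
proof (induction k)
  case 0
  have "0 \<le> f t" if "0 < t" for t
    using cm that unfolding completely_monotone_def by (metis funpow_0 mult_1 power_0)
  then show ?case
    by (auto intro!: nn_integral_mono simp: indicator_def)
next
  case (Suc k)
  have \<gamma>: "real k + \<beta> > -1"
    using \<beta> by simp
  have "(\<integral>\<^sup>+ t \<in> {0<..<t0}. ennreal (\<bar>(deriv ^^ Suc k) f t\<bar> * t powr (real (Suc k) + \<beta>)) \<partial>lborel)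
      \<le> ennreal (1 + (real k + \<beta>)) * (\<integral>\<^sup>+ t \<in> {0<..<t0}. ennreal (\<bar>(deriv ^^ k) f t\<bar> * t powr (real k + \<beta>)) \<partial>lborel)"
    using completely_monotone_nn_integral_deriv_Suc_le[OF cm \<gamma> t0, of k] by (simp add: add_ac)
  also have "\<dots> \<le> ennreal (1 + (real k + \<beta>)) * (ennreal (pochhammer (1 + \<beta>) k) * (\<integral>\<^sup>+ t \<in> {0<..<t0}. ennreal (f t * t powr \<beta>) \<partial>lborel))"
    by (rule mult_left_mono[OF Suc.IH]) simp
  also have "\<dots> = ennreal (pochhammer (1 + \<beta>) (Suc k)) * (\<integral>\<^sup>+ t \<in> {0<..<t0}. ennreal (f t * t powr \<beta>) \<partial>lborel)"
    using \<gamma> \<beta> by (simp add: pochhammer_rec' ennreal_mult pochhammer_nonneg add_ac mult.assoc)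
  finally show ?case .
qed

lemma smooth_pos_monotone_nn_integral_deriv_le:
  fixes f :: "real \<Rightarrow> real"
  assumes sm: "smooth_pos f" and \<beta>: "\<beta> > -1" and t0: "0 < t0"
    and sign: "(\<forall>t>0. deriv f t \<ge> 0) \<or> (\<forall>t>0. deriv f t \<le> 0)"
  shows "(\<integral>\<^sup>+ t \<in> {0<..<t0}. ennreal (\<bar>deriv f t\<bar> * t powr (1 + \<beta>)) \<partial>lborel)
       \<le> ennreal (1 + \<beta>) * (\<integral>\<^sup>+ t \<in> {0<..<t0}. ennreal (\<bar>f t\<bar> * t powr \<beta>) \<partial>lborel)
         + ennreal (\<bar>f t0\<bar> * t0 powr (1 + \<beta>))"
proof -
  have f': "(f has_real_derivative deriv f t) (at t)" if "0 < t" for t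
    using smooth_pos_has_real_derivative[OF sm that, of 0] by simp
  have cont: "continuous_on {0<..} (deriv f)"
    using smooth_pos_continuous_on[OF sm, of 1] by simp
  from sign show ?thesis
  proof
    assume nonneg: "\<forall>t>0. deriv f t \<ge> 0"
    have "(\<integral>\<^sup>+ t \<in> {0<..<t0}. ennreal (\<bar>deriv f t\<bar> * t powr (1 + \<beta>)) \<partial>lborel)
        = (\<integral>\<^sup>+ t \<in> {0<..<t0}. ennreal (deriv f t * t powr (1 + \<beta>)) \<partial>lborel)"
      using nonneg by (intro nn_integral_cong) (auto simp: indicator_def)
    also have "\<dots> \<le> ennreal (1 + \<beta>) * (\<integral>\<^sup>+ t \<in> {0<..<t0}. ennreal (\<bar>f t\<bar> * t powr \<beta>) \<partial>lborel)
         + ennreal (\<bar>f t0\<bar> * t0 powr (1 + \<beta>))"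
      using \<beta> t0 f' cont nonneg by (intro nn_integral_deriv_mult_powr_le) auto
    finally show ?thesis .
  next
    assume nonpos: "\<forall>t>0. deriv f t \<le> 0"
    have "(\<integral>\<^sup>+ t \<in> {0<..<t0}. ennreal (\<bar>deriv f t\<bar> * t powr (1 + \<beta>)) \<partial>lborel)
        = (\<integral>\<^sup>+ t \<in> {0<..<t0}. ennreal (- deriv f t * t powr (1 + \<beta>)) \<partial>lborel)"
      using nonpos by (intro nn_integral_cong) (auto simp: indicator_def)
    also have "\<dots> \<le> ennreal (1 + \<beta>) * (\<integral>\<^sup>+ t \<in> {0<..<t0}. ennreal (\<bar>- f t\<bar> * t powr \<beta>) \<partial>lborel)
         + ennreal (\<bar>- f t0\<bar> * t0 powr (1 + \<beta>))"
      using \<beta> t0 f' cont nonpos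
      by (intro nn_integral_deriv_mult_powr_le) (auto intro: DERIV_minus continuous_intros)
    finally show ?thesis by simp
  qed
qed

theorem lemma6p4:
  shows
  "(\<forall>(k::nat) (\<beta>::real). \<beta> > -1 \<longrightarrow>
      (\<exists>C::real. C > 0 \<and>
        (\<forall>(f::real \<Rightarrow> real) (t0::real).
           completely_monotone f \<longrightarrow> t0 > 0 \<longrightarrow>
           (\<integral>\<^sup>+ t \<in> {0<..<t0}. ennreal (\<bar>f t\<bar> * t powr \<beta>) \<partial>lborel) < \<infinity> \<longrightarrow>
           (\<integral>\<^sup>+ t \<in> {0<..<t0}. ennreal (\<bar>(deriv ^^ k) f t\<bar> * t powr (real k + \<beta>)) \<partial>lborel)
             \<le> ennreal C * (\<integral>\<^sup>+ t \<in> {0<..<t0}. ennreal (f t * t powr \<beta>) \<partial>lborel))))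
   \<and>
   (\<forall>(f::real \<Rightarrow> real) (\<beta>::real) (t0::real).
      smooth_pos f \<longrightarrow> \<beta> > -1 \<longrightarrow> t0 > 0 \<longrightarrow>
      (\<integral>\<^sup>+ t \<in> {0<..<t0}. ennreal (\<bar>f t\<bar> * t powr \<beta>) \<partial>lborel) < \<infinity> \<longrightarrow>
      ((\<forall>t>0. deriv f t \<ge> 0) \<or> (\<forall>t>0. deriv f t \<le> 0)) \<longrightarrow>
      (\<integral>\<^sup>+ t \<in> {0<..<t0}. ennreal (\<bar>deriv f t\<bar> * t powr (1 + \<beta>)) \<partial>lborel)
        \<le> ennreal (1 + \<beta>) * (\<integral>\<^sup>+ t \<in> {0<..<t0}. ennreal (\<bar>f t\<bar> * t powr \<beta>) \<partial>lborel)
           + ennreal (\<bar>f t0\<bar> * t0 powr (1 + \<beta>)))"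
proof (intro conjI allI impI)
  fix k :: nat and \<beta> :: real
  assume \<beta>: "\<beta> > -1"
  show "\<exists>C>0. \<forall>f t0. completely_monotone f \<longrightarrow> t0 > 0 \<longrightarrow>
           (\<integral>\<^sup>+ t \<in> {0<..<t0}. ennreal (\<bar>f t\<bar> * t powr \<beta>) \<partial>lborel) < \<infinity> \<longrightarrow>
           (\<integral>\<^sup>+ t \<in> {0<..<t0}. ennreal (\<bar>(deriv ^^ k) f t\<bar> * t powr (real k + \<beta>)) \<partial>lborel)
             \<le> ennreal C * (\<integral>\<^sup>+ t \<in> {0<..<t0}. ennreal (f t * t powr \<beta>) \<partial>lborel)"
    using \<beta> completely_monotone_nn_integral_higher_deriv_le[OF _ \<beta>]
    by (intro exI[of _ "pochhammer (1 + \<beta>) k"]) (auto intro: pochhammer_pos)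
qed (rule smooth_pos_monotone_nn_integral_deriv_le)

end
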